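(* Let $\Gamma$ be a finitely presented group, $\Gamma = \langle S \mid R\rangle$ with $S$ a finite symmetric generating set and $R$ a finite set of relators (words in $S$), and assume that $\Gamma$ is one-ended. Let $r$ be a real number with $r > \max_{w \in R} \tfrac{|w|}{2}$, where $|w|$ denotes the word length of $w$. Then the Cayley graph of $\Gamma$ with respect to $S$ has connected spheres with constant $r$: for every integer $n \geq 0$, the set $B_{n+r} \cap B_n^{\mathrm{c},\infty}$ is connected.
   Context: For a finitely generated group $\Gamma$ and a finite set $S \subset \Gamma$ with $s \in S \Rightarrow s^{-1} \in S$ generating $\Gamma$, the Cayley graph has vertex set $\Gamma$, with $g,h$ joined by an edge whenever $gs = h$ for some $s \in S$; it carries the graph (word) metric. $B_t$ denotes the ball of radius $t$ centred at the identity element $e$ in this metric. $\Gamma$ is one-ended if, for all large $n$, the complement of $B_n$ in the Cayley graph has exactly one infinite connected component; $B_n^{\mathrm{c},\infty}$ denotes this infinite connected component of the complement $B_n^{\mathrm{c}}$ of $B_n$. A set of vertices is called connected if the subgraph of the Cayley graph induced on it is connected. The Cayley graph has connected spheres with constant $r>0$ if for all $n \geq 0$ the set $B_{n+r} \cap B_n^{\mathrm{c},\infty}$ is connected. *)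

theory Defs
  imports Complex_Main "HOL-Algebra.Group"
begin

definition word_eval :: "('a, 'b) monoid_scheme \<Rightarrow> 'a list \<Rightarrow> 'a" where
  "word_eval G w = foldr (\<lambda>s g. s \<otimes>\<^bsub>G\<^esub> g) w \<one>\<^bsub>G\<^esub>"

inductive word_step :: "('a, 'b) monoid_scheme \<Rightarrow> 'a set \<Rightarrow> 'a list set \<Rightarrow> 'a list \<Rightarrow> 'a list \<Rightarrow> bool"
  for G S R where
  ins_backtrack: "s \<in> S \<Longrightarrow> word_step G S R (u @ v) (u @ [s, inv\<^bsub>G\<^esub> s] @ v)"
| ins_relator: "w \<in> R \<Longrightarrow> word_step G S R (u @ v) (u @ w @ v)"

definition is_presentation :: "('a, 'b) monoid_scheme \<Rightarrow> 'a set \<Rightarrow> 'a list set \<Rightarrow> bool" where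
  "is_presentation G S R \<longleftrightarrow>
     S \<subseteq> carrier G \<and> (\<forall>s\<in>S. inv\<^bsub>G\<^esub> s \<in> S) \<and>
     (\<forall>g\<in>carrier G. \<exists>w. set w \<subseteq> S \<and> word_eval G w = g) \<and>
     (\<forall>w\<in>R. set w \<subseteq> S) \<and>
     (\<forall>w. set w \<subseteq> S \<longrightarrow> (word_eval G w = \<one>\<^bsub>G\<^esub> \<longleftrightarrow> equivclp (word_step G S R) w []))"

definition cayley_adj :: "('a, 'b) monoid_scheme \<Rightarrow> 'a set \<Rightarrow> 'a \<Rightarrow> 'a \<Rightarrow> bool" where
  "cayley_adj G S g h \<longleftrightarrow> g \<in> carrier G \<and> (\<exists>s\<in>S. g \<otimes>\<^bsub>G\<^esub> s = h)"

text \<open>Word length = graph distance from the identity.\<close>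
definition word_length :: "('a, 'b) monoid_scheme \<Rightarrow> 'a set \<Rightarrow> 'a \<Rightarrow> nat" where
  "word_length G S g = (LEAST n. \<exists>w. length w = n \<and> set w \<subseteq> S \<and> word_eval G w = g)"

definition cayley_ball :: "('a, 'b) monoid_scheme \<Rightarrow> 'a set \<Rightarrow> real \<Rightarrow> 'a set" where
  "cayley_ball G S t = {g \<in> carrier G. real (word_length G S g) \<le> t}"

definition induced_adj :: "('a, 'b) monoid_scheme \<Rightarrow> 'a set \<Rightarrow> 'a set \<Rightarrow> 'a \<Rightarrow> 'a \<Rightarrow> bool" where
  "induced_adj G S A x y \<longleftrightarrow> x \<in> A \<and> y \<in> A \<and> (cayley_adj G S x y \<or> cayley_adj G S y x)"

definition connected_vset :: "('a, 'b) monoid_scheme \<Rightarrow> 'a set \<Rightarrow> 'a set \<Rightarrow> bool" where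
  "connected_vset G S A \<longleftrightarrow> (\<forall>x\<in>A. \<forall>y\<in>A. (induced_adj G S A)\<^sup>*\<^sup>* x y)"

definition vcomponents :: "('a, 'b) monoid_scheme \<Rightarrow> 'a set \<Rightarrow> 'a set \<Rightarrow> 'a set set" where
  "vcomponents G S A = {{y. (induced_adj G S A)\<^sup>*\<^sup>* x y} | x. x \<in> A}"

definition one_ended :: "('a, 'b) monoid_scheme \<Rightarrow> 'a set \<Rightarrow> bool" where
  "one_ended G S \<longleftrightarrow> (\<exists>N. \<forall>n\<ge>N. \<exists>!C. C \<in> vcomponents G S (carrier G - cayley_ball G S (real n)) \<and> infinite C)"

definition inf_comp :: "('a, 'b) monoid_scheme \<Rightarrow> 'a set \<Rightarrow> nat \<Rightarrow> 'a set" where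
  "inf_comp G S n = (THE C. C \<in> vcomponents G S (carrier G - cayley_ball G S (real n)) \<and> infinite C)"

end

theory Submission
  imports Defs
begin

text \<open>Let \<open>U\<close> be a component of the complement of \<open>B\<^sub>n\<close>, let \<open>x\<close> lie in the slice
  \<open>A = B\<^sub>n\<^sub>+\<^sub>r \<inter> U\<close> and let \<open>C\<close> be the component of \<open>x\<close> in \<open>A\<close>. Count each edge from
  \<open>B\<^sub>n\<close> into \<open>C\<close> with \<open>+1\<close> and each edge from \<open>C\<close> into \<open>B\<^sub>n\<close> with \<open>-1\<close>. A relator loop
  meeting \<open>B\<^sub>n\<close> has length \<open>< 2r\<close>, so it stays in \<open>B\<^sub>n\<^sub>+\<^sub>r\<close>, where this edge function is the
  coboundary of the indicator of \<open>C\<close>; hence its sum around every relator loop is \<open>0\<close>, and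
  since the presentation generates all closed words from relators and backtracks, its sum
  around every closed path is \<open>0\<close>. A point of \<open>A\<close> outside \<open>C\<close> would yield a closed path
  entering \<open>C\<close> from \<open>B\<^sub>n\<close> exactly once. So the slice of every component is connected;
  one-endedness only serves to make the infinite component of the complement of \<open>B\<^sub>n\<close> such
  a component.\<close>

section \<open>Induced subgraphs of the Cayley graph\<close>

lemma induced_adj_sym: "induced_adj G S X x y \<longleftrightarrow> induced_adj G S X y x"
  unfolding induced_adj_def by blast

lemma induced_path_sym:
  "(induced_adj G S X)\<^sup>*\<^sup>* a b \<Longrightarrow> (induced_adj G S X)\<^sup>*\<^sup>* b a"
proof (induction rule: rtranclp_induct)
  case (step y z)
  then show ?case by (meson induced_adj_sym converse_rtranclp_into_rtranclp)
qed simp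

lemma induced_path_mono:
  assumes "X \<subseteq> Y" and "(induced_adj G S X)\<^sup>*\<^sup>* a b"
  shows "(induced_adj G S Y)\<^sup>*\<^sup>* a b"
proof -
  have "induced_adj G S X \<le> induced_adj G S Y"
    using assms(1) unfolding induced_adj_def by auto
  then show ?thesis using assms(2) rtranclp_mono by blast
qed

lemma induced_path_in_set:
  "(induced_adj G S X)\<^sup>*\<^sup>* a b \<Longrightarrow> a \<in> X \<Longrightarrow> b \<in> X"
  by (induction rule: rtranclp_induct) (auto simp: induced_adj_def)

lemma vcomponents_subset: "C \<in> vcomponents G S X \<Longrightarrow> C \<subseteq> X"
  unfolding vcomponents_def using induced_path_in_set by fastforce

lemma vcomponentI: "x \<in> X \<Longrightarrow> {z. (induced_adj G S X)\<^sup>*\<^sup>* x z} \<in> vcomponents G S X"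
  unfolding vcomponents_def by blast

lemma vcomponents_eq_reachable:
  assumes "C \<in> vcomponents G S X" and "y \<in> C"
  shows "C = {z. (induced_adj G S X)\<^sup>*\<^sup>* y z}"
proof -
  obtain x where C: "C = {z. (induced_adj G S X)\<^sup>*\<^sup>* x z}"
    using assms(1) unfolding vcomponents_def by blast
  then have "(induced_adj G S X)\<^sup>*\<^sup>* x y" using assms(2) by simp
  then show ?thesis
    unfolding C by (meson induced_path_sym rtranclp_trans)
qed

lemma vcomponents_disjoint:
  "C \<in> vcomponents G S X \<Longrightarrow> C' \<in> vcomponents G S X \<Longrightarrow> y \<in> C \<Longrightarrow> y \<in> C' \<Longrightarrow> C = C'"
  using vcomponents_eq_reachable by metis

lemma vcomponents_adj_closed:
  assumes C: "C \<in> vcomponents G S X" and "a \<in> C" and "b \<in> X"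
    and "cayley_adj G S a b \<or> cayley_adj G S b a"
  shows "b \<in> C"
proof -
  have "a \<in> X" using vcomponents_subset[OF C] \<open>a \<in> C\<close> by blast
  then have "induced_adj G S X a b"
    using assms(3,4) unfolding induced_adj_def by blast
  then show ?thesis using vcomponents_eq_reachable[OF C \<open>a \<in> C\<close>] by simp
qed

lemma induced_path_into_component:
  assumes C: "C \<in> vcomponents G S X" and "T \<subseteq> X"
    and "(induced_adj G S T)\<^sup>*\<^sup>* a b" and "b \<in> C"
  shows "a \<in> C \<and> (induced_adj G S (T \<inter> C))\<^sup>*\<^sup>* a b"
  using assms(3)
proof (induction rule: converse_rtranclp_induct)
  case base then show ?case using \<open>b \<in> C\<close> by simp
next
  case (step y z)
  then have zC: "z \<in> C" by blast
  from step(1) have "y \<in> T" "z \<in> T" and adj: "cayley_adj G S y z \<or> cayley_adj G S z y"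
    unfolding induced_adj_def by auto
  then have "y \<in> C"
    using vcomponents_adj_closed[OF C zC] \<open>T \<subseteq> X\<close> by blast
  moreover have "induced_adj G S (T \<inter> C) y z"
    using \<open>y \<in> C\<close> \<open>y \<in> T\<close> \<open>z \<in> T\<close> zC adj unfolding induced_adj_def by blast
  ultimately show ?case using step(3) by (blast intro: converse_rtranclp_into_rtranclp)
qed

section \<open>Words and word length\<close>

lemma word_eval_Nil [simp]: "word_eval G [] = \<one>\<^bsub>G\<^esub>"
  by (simp add: word_eval_def)

lemma word_eval_Cons [simp]: "word_eval G (s # w) = s \<otimes>\<^bsub>G\<^esub> word_eval G w"
  by (simp add: word_eval_def)

context group
begin

lemma word_eval_closed [simp]: "set w \<subseteq> carrier G \<Longrightarrow> word_eval G w \<in> carrier G"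
  by (induction w) auto

lemma word_eval_append:
  "set u \<subseteq> carrier G \<Longrightarrow> set v \<subseteq> carrier G \<Longrightarrow>
   word_eval G (u @ v) = word_eval G u \<otimes> word_eval G v"
  by (induction u) (auto simp: m_assoc)

end

locale cayley_presentation = group G for G (structure) +
  fixes S :: "'a set" and R :: "'a list set"
  assumes finite_gens: "finite S" and presentation: "is_presentation G S R"
begin

abbreviation len :: "'a \<Rightarrow> nat" where "len \<equiv> word_length G S"

abbreviation ball_le :: "nat \<Rightarrow> 'a set" where "ball_le m \<equiv> {g \<in> carrier G. len g \<le> m}"

abbreviation ball_compl :: "nat \<Rightarrow> 'a set" where
  "ball_compl m \<equiv> carrier G - cayley_ball G S (real m)"

lemma gens_closed: "S \<subseteq> carrier G"
  using presentation unfolding is_presentation_def by blast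

lemma gens_inv: "s \<in> S \<Longrightarrow> inv s \<in> S"
  using presentation unfolding is_presentation_def by blast

lemma words_generate: "g \<in> carrier G \<Longrightarrow> \<exists>w. set w \<subseteq> S \<and> word_eval G w = g"
  using presentation unfolding is_presentation_def by blast

lemma relator_word: "w \<in> R \<Longrightarrow> set w \<subseteq> S"
  using presentation unfolding is_presentation_def by blast

lemma trivial_word_iff:
  "set w \<subseteq> S \<Longrightarrow> word_eval G w = \<one> \<longleftrightarrow> equivclp (word_step G S R) w []"
  using presentation unfolding is_presentation_def by blast

lemma gens_word_closed: "set w \<subseteq> S \<Longrightarrow> set w \<subseteq> carrier G"
  using gens_closed by blast

lemma relator_eval: "w \<in> R \<Longrightarrow> word_eval G w = \<one>"
proof -
  assume w: "w \<in> R"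
  have "word_step G S R ([] @ []) ([] @ w @ [])" by (rule word_step.ins_relator[OF w])
  then have "equivclp (word_step G S R) w []"
    by (simp add: symclpI2 r_into_rtranclp equivclp_def)
  then show ?thesis using trivial_word_iff relator_word[OF w] by blast
qed

lemma geodesic_word_exists:
  assumes "g \<in> carrier G"
  shows "\<exists>w. length w = len g \<and> set w \<subseteq> S \<and> word_eval G w = g"
proof -
  have "\<exists>n w. length w = n \<and> set w \<subseteq> S \<and> word_eval G w = g"
    using words_generate[OF assms] by blast
  then show ?thesis unfolding word_length_def by (rule LeastI_ex)
qed

lemma len_le_length: "set w \<subseteq> S \<Longrightarrow> len (word_eval G w) \<le> length w"
  unfolding word_length_def by (rule Least_le) blast

lemma len_eq_0_imp_one: "g \<in> carrier G \<Longrightarrow> len g = 0 \<Longrightarrow> g = \<one>"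
  using geodesic_word_exists[of g] by auto

lemma len_mult_gen_le: "h \<in> carrier G \<Longrightarrow> s \<in> S \<Longrightarrow> len (h \<otimes> s) \<le> len h + 1"
proof -
  assume h: "h \<in> carrier G" and s: "s \<in> S"
  obtain w where w: "length w = len h" "set w \<subseteq> S" "word_eval G w = h"
    using geodesic_word_exists[OF h] by blast
  have "word_eval G (w @ [s]) = h \<otimes> s"
    using w s gens_closed by (auto simp: word_eval_append gens_word_closed)
  then show ?thesis using len_le_length[of "w @ [s]"] w s by auto
qed

lemma len_le_mult_gen: "h \<in> carrier G \<Longrightarrow> s \<in> S \<Longrightarrow> len h \<le> len (h \<otimes> s) + 1"
proof -
  assume h: "h \<in> carrier G" and s: "s \<in> S"
  have sc: "s \<in> carrier G" using s gens_closed by blast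
  have "h = (h \<otimes> s) \<otimes> inv s" using h sc by (simp add: m_assoc)
  then show ?thesis using len_mult_gen_le[of "h \<otimes> s" "inv s"] h sc gens_inv[OF s] by auto
qed

lemma len_Suc_predecessor:
  assumes g: "g \<in> carrier G" and "len g = Suc k"
  shows "\<exists>h s. h \<in> carrier G \<and> s \<in> S \<and> len h = k \<and> h \<otimes> s = g"
proof -
  obtain w where w: "length w = Suc k" "set w \<subseteq> S" "word_eval G w = g"
    using geodesic_word_exists[OF g] assms(2) by auto
  then obtain v s where ws: "w = v @ [s]"
    by (metis length_Suc_conv_rev)
  have s: "s \<in> S" and vS: "set v \<subseteq> S" using w ws by auto
  define h where "h = word_eval G v"
  have h: "h \<in> carrier G" unfolding h_def using vS by (simp add: gens_word_closed)
  have hs: "h \<otimes> s = g"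
    using w ws s vS gens_closed unfolding h_def by (auto simp: word_eval_append gens_word_closed)
  have "len h \<le> k" using len_le_length[OF vS] w ws unfolding h_def by simp
  moreover have "len g \<le> len h + 1" using len_mult_gen_le[OF h s] hs by simp
  ultimately show ?thesis using h s hs assms(2) by (intro exI[of _ h] exI[of _ s]) auto
qed

lemma geodesic_descent:
  assumes "g \<in> carrier G" and "j \<le> len g"
  shows "\<exists>c \<in> carrier G. len c = j \<and>
    (induced_adj G S {z \<in> carrier G. j \<le> len z \<and> len z \<le> len g})\<^sup>*\<^sup>* c g"
  using assms
proof (induction "len g" arbitrary: g)
  case 0 then show ?case by auto
next
  case (Suc k)
  show ?case
  proof (cases "j = len g")
    case True then show ?thesis using Suc by auto
  next
    case False
    then have "j \<le> k" using Suc by auto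
    obtain h s where hs: "h \<in> carrier G" "s \<in> S" "len h = k" "h \<otimes> s = g"
      using len_Suc_predecessor[OF Suc(3)] Suc(2) by metis
    obtain c where c: "c \<in> carrier G" "len c = j"
      "(induced_adj G S {z \<in> carrier G. j \<le> len z \<and> len z \<le> len h})\<^sup>*\<^sup>* c h"
      using Suc(1)[of h] hs \<open>j \<le> k\<close> by auto
    have "(induced_adj G S {z \<in> carrier G. j \<le> len z \<and> len z \<le> len g})\<^sup>*\<^sup>* c h"
      by (rule induced_path_mono[OF _ c(3)]) (use hs Suc(2) in auto)
    moreover have "induced_adj G S {z \<in> carrier G. j \<le> len z \<and> len z \<le> len g} h g"
      unfolding induced_adj_def cayley_adj_def using hs Suc \<open>j \<le> k\<close> by auto
    ultimately have "(induced_adj G S {z \<in> carrier G. j \<le> len z \<and> len z \<le> len g})\<^sup>*\<^sup>* c g"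
      by (rule rtranclp.rtrancl_into_rtrancl)
    then show ?thesis using c by blast
  qed
qed

lemma ball_le_connected:
  assumes "k \<in> ball_le m" and "k' \<in> ball_le m"
  shows "(induced_adj G S (ball_le m))\<^sup>*\<^sup>* k k'"
proof -
  have path_from_one: "(induced_adj G S (ball_le m))\<^sup>*\<^sup>* \<one> h" if h: "h \<in> ball_le m" for h
  proof -
    obtain c where "c \<in> carrier G" "len c = 0"
      and c: "(induced_adj G S {z \<in> carrier G. 0 \<le> len z \<and> len z \<le> len h})\<^sup>*\<^sup>* c h"
      using geodesic_descent[of h 0] h by auto
    moreover have "c = \<one>" using len_eq_0_imp_one \<open>c \<in> carrier G\<close> \<open>len c = 0\<close> by blast
    moreover have "{z \<in> carrier G. 0 \<le> len z \<and> len z \<le> len h} \<subseteq> ball_le m" using h by auto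
    ultimately show ?thesis using induced_path_mono[of _ "ball_le m" G S c h] c by simp
  qed
  show ?thesis
    using induced_path_sym[OF path_from_one[OF assms(1)]] path_from_one[OF assms(2)]
    by (rule rtranclp_trans)
qed

section \<open>Components of the complements of balls\<close>

lemma cayley_ball_nat: "cayley_ball G S (real m) = ball_le m"
  unfolding cayley_ball_def by simp

lemma ball_compl_eq: "ball_compl m = {g \<in> carrier G. m < len g}"
  unfolding cayley_ball_nat by auto

lemma finite_ball_le: "finite (ball_le m)"
proof -
  have "ball_le m \<subseteq> word_eval G ` {w. set w \<subseteq> S \<and> length w \<le> m}"
    using geodesic_word_exists by force
  then show ?thesis using finite_lists_length_le[OF finite_gens] finite_surj by blast
qed

lemma ball_compl_component_meets_sphere:
  assumes X: "X \<in> vcomponents G S (ball_compl m)"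
  shows "\<exists>c \<in> ball_le (Suc m). X = {y. (induced_adj G S (ball_compl m))\<^sup>*\<^sup>* c y}"
proof -
  obtain x where x: "x \<in> ball_compl m" "x \<in> X"
    using X unfolding vcomponents_def by blast
  then have "x \<in> carrier G" "Suc m \<le> len x" unfolding ball_compl_eq by auto
  then obtain c where c: "c \<in> carrier G" "len c = Suc m"
    "(induced_adj G S {z \<in> carrier G. Suc m \<le> len z \<and> len z \<le> len x})\<^sup>*\<^sup>* c x"
    using geodesic_descent by blast
  have "(induced_adj G S (ball_compl m))\<^sup>*\<^sup>* x c"
    by (rule induced_path_sym, rule induced_path_mono[OF _ c(3)]) (auto simp: ball_compl_eq)
  then have "c \<in> X" using vcomponents_eq_reachable[OF X \<open>x \<in> X\<close>] by simp
  then have "X = {y. (induced_adj G S (ball_compl m))\<^sup>*\<^sup>* c y}"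
    by (rule vcomponents_eq_reachable[OF X])
  then show ?thesis using c by auto
qed

lemma finite_ball_compl_components: "finite (vcomponents G S (ball_compl m))"
proof -
  have "vcomponents G S (ball_compl m) \<subseteq>
      (\<lambda>c. {y. (induced_adj G S (ball_compl m))\<^sup>*\<^sup>* c y}) ` ball_le (Suc m)"
    using ball_compl_component_meets_sphere by blast
  then show ?thesis using finite_ball_le finite_surj by blast
qed

text \<open>Since balls are finite and there are finitely many components, an infinite component
  of the complement of a ball contains an infinite component of the complement of any larger ball.\<close>

lemma infinite_component_shrink:
  assumes "n \<le> m" and C: "C \<in> vcomponents G S (ball_compl n)" and "infinite C"
  shows "\<exists>X \<in> vcomponents G S (ball_compl m). X \<subseteq> C \<and> infinite X"
proof (rule ccontr)
  assume no_inf: "\<not> ?thesis"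
  have "C - ball_le m \<subseteq> \<Union>{X \<in> vcomponents G S (ball_compl m). X \<subseteq> C}"
  proof
    fix y assume y: "y \<in> C - ball_le m"
    then have "y \<in> ball_compl m" using vcomponents_subset[OF C] cayley_ball_nat by auto
    define X where "X = {z. (induced_adj G S (ball_compl m))\<^sup>*\<^sup>* y z}"
    have sub: "ball_compl m \<subseteq> ball_compl n" using \<open>n \<le> m\<close> by (auto simp: ball_compl_eq)
    have "X \<subseteq> C"
    proof
      fix z assume "z \<in> X"
      then have "(induced_adj G S (ball_compl m))\<^sup>*\<^sup>* y z" by (simp add: X_def)
      then have "(induced_adj G S (ball_compl n))\<^sup>*\<^sup>* y z" by (rule induced_path_mono[OF sub])
      then show "z \<in> C" using vcomponents_eq_reachable[OF C] y by blast
    qed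
    moreover have "X \<in> vcomponents G S (ball_compl m)" "y \<in> X"
      unfolding X_def using vcomponentI[OF \<open>y \<in> ball_compl m\<close>] by auto
    ultimately show "y \<in> \<Union>{X \<in> vcomponents G S (ball_compl m). X \<subseteq> C}" by blast
  qed
  moreover have "finite (\<Union>{X \<in> vcomponents G S (ball_compl m). X \<subseteq> C})"
    using no_inf finite_ball_compl_components by auto
  ultimately have "finite (C - ball_le m)" by (rule finite_subset)
  then have "finite C" using finite_ball_le by (metis finite_Diff2)
  then show False using \<open>infinite C\<close> by blast
qed

lemma one_ended_unique_infinite_component:
  assumes "one_ended G S"
  shows "\<exists>!C. C \<in> vcomponents G S (ball_compl n) \<and> infinite C"
proof -
  obtain N where N: "\<forall>n\<ge>N. \<exists>!C. C \<in> vcomponents G S (ball_compl n) \<and> infinite C"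
    using assms unfolding one_ended_def by blast
  define m where "m = max N n"
  obtain X0 where X0: "X0 \<in> vcomponents G S (ball_compl m)" "infinite X0"
    and X0_unique: "\<And>X. X \<in> vcomponents G S (ball_compl m) \<Longrightarrow> infinite X \<Longrightarrow> X = X0"
    using N m_def by (metis max.cobounded1)
  obtain x where x: "x \<in> ball_compl m" "X0 = {z. (induced_adj G S (ball_compl m))\<^sup>*\<^sup>* x z}"
    using X0(1) unfolding vcomponents_def by blast
  have sub: "ball_compl m \<subseteq> ball_compl n" unfolding m_def ball_compl_eq by auto
  define C where "C = {z. (induced_adj G S (ball_compl n))\<^sup>*\<^sup>* x z}"
  have C: "C \<in> vcomponents G S (ball_compl n)"
    unfolding C_def using x sub by (intro vcomponentI) auto
  have "X0 \<subseteq> C" unfolding C_def x(2) using induced_path_mono[OF sub] by blast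
  then have "infinite C" using X0 finite_subset by blast
  show ?thesis
  proof (rule ex1I[of _ C])
    show "C \<in> vcomponents G S (ball_compl n) \<and> infinite C" using C \<open>infinite C\<close> by blast
  next
    fix C' assume C': "C' \<in> vcomponents G S (ball_compl n) \<and> infinite C'"
    obtain X1 where X1: "X1 \<in> vcomponents G S (ball_compl m)" "X1 \<subseteq> C'" "infinite X1"
      using infinite_component_shrink[of n m C'] C' m_def by auto
    obtain X2 where X2: "X2 \<in> vcomponents G S (ball_compl m)" "X2 \<subseteq> C" "infinite X2"
      using infinite_component_shrink[of n m C] C \<open>infinite C\<close> m_def by auto
    have "X1 = X2" using X0_unique[OF X1(1,3)] X0_unique[OF X2(1,3)] by simp
    moreover obtain y where "y \<in> X1" using infinite_imp_nonempty[OF X1(3)] by blast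
    ultimately have "y \<in> C'" "y \<in> C" using X1(2) X2(2) by auto
    then show "C' = C" using vcomponents_disjoint[OF conjunct1[OF C'] C] by blast
  qed
qed

lemma inf_comp_in_vcomponents:
  assumes "one_ended G S"
  shows "inf_comp G S n \<in> vcomponents G S (ball_compl n)"
  using theI'[OF one_ended_unique_infinite_component[OF assms, of n]]
  unfolding inf_comp_def by blast

end

section \<open>Flux of an edge function along a path\<close>

definition path_vertex :: "('a, 'b) monoid_scheme \<Rightarrow> 'a \<Rightarrow> 'a list \<Rightarrow> nat \<Rightarrow> 'a" where
  "path_vertex G g w i = g \<otimes>\<^bsub>G\<^esub> word_eval G (take i w)"

fun word_flux :: "('a, 'b) monoid_scheme \<Rightarrow> ('a \<Rightarrow> 'a \<Rightarrow> int) \<Rightarrow> 'a \<Rightarrow> 'a list \<Rightarrow> int" where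
  "word_flux G f g [] = 0"
| "word_flux G f g (s # w) = f g (g \<otimes>\<^bsub>G\<^esub> s) + word_flux G f (g \<otimes>\<^bsub>G\<^esub> s) w"

context group
begin

lemma path_vertex_closed:
  "g \<in> carrier G \<Longrightarrow> set w \<subseteq> carrier G \<Longrightarrow> path_vertex G g w i \<in> carrier G"
  unfolding path_vertex_def by (meson m_closed word_eval_closed set_take_subset subset_trans)

lemma path_vertex_0 [simp]: "g \<in> carrier G \<Longrightarrow> path_vertex G g w 0 = g"
  by (simp add: path_vertex_def)

lemma path_vertex_length [simp]: "path_vertex G g w (length w) = g \<otimes> word_eval G w"
  by (simp add: path_vertex_def)

lemma path_vertex_Suc:
  assumes "g \<in> carrier G" "set w \<subseteq> carrier G" "i < length w"
  shows "path_vertex G g w (Suc i) = path_vertex G g w i \<otimes> w ! i"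
proof -
  have "set (take i w) \<subseteq> carrier G" "w ! i \<in> carrier G"
    using assms by (auto dest: in_set_takeD)
  then show ?thesis
    using assms unfolding path_vertex_def
    by (simp add: take_Suc_conv_app_nth word_eval_append m_assoc)
qed

lemma path_vertex_Cons_Suc:
  assumes "g \<in> carrier G" "set (s # w) \<subseteq> carrier G"
  shows "path_vertex G g (s # w) (Suc i) = path_vertex G (g \<otimes> s) w i"
proof -
  have "set (take i w) \<subseteq> carrier G" using assms(2) set_take_subset[of i w] by auto
  then show ?thesis using assms by (simp add: path_vertex_def m_assoc)
qed

lemma path_vertex_snoc:
  "i \<le> length u \<Longrightarrow> path_vertex G g (u @ [t]) i = path_vertex G g u i"
  unfolding path_vertex_def by simp

lemma word_flux_append:
  "g \<in> carrier G \<Longrightarrow> set u \<subseteq> carrier G \<Longrightarrow>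
   word_flux G f g (u @ v) = word_flux G f g u + word_flux G f (g \<otimes> word_eval G u) v"
proof (induction u arbitrary: g)
  case (Cons s u)
  then have "g \<otimes> s \<otimes> word_eval G u = g \<otimes> (s \<otimes> word_eval G u)"
    by (simp add: m_assoc)
  with Cons show ?case by simp
qed simp

lemma word_flux_eq_sum:
  "g \<in> carrier G \<Longrightarrow> set w \<subseteq> carrier G \<Longrightarrow>
   word_flux G f g w = (\<Sum>i<length w. f (path_vertex G g w i) (path_vertex G g w (Suc i)))"
proof (induction w arbitrary: g)
  case (Cons s w)
  then show ?case
    by (simp add: sum.lessThan_Suc_shift path_vertex_Cons_Suc del: sum.lessThan_Suc)
qed simp

lemma word_flux_eq_0I:
  assumes "g \<in> carrier G" "set w \<subseteq> carrier G"
    and "\<And>i. i < length w \<Longrightarrow> f (path_vertex G g w i) (path_vertex G g w (Suc i)) = 0"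
  shows "word_flux G f g w = 0"
  using assms by (simp add: word_flux_eq_sum)

lemma word_flux_telescope:
  assumes "g \<in> carrier G" "set w \<subseteq> carrier G"
    and "\<And>i. i < length w \<Longrightarrow> f (path_vertex G g w i) (path_vertex G g w (Suc i)) =
           \<chi> (path_vertex G g w (Suc i)) - \<chi> (path_vertex G g w i)"
  shows "word_flux G f g w = \<chi> (g \<otimes> word_eval G w) - \<chi> g"
proof -
  have "word_flux G f g w =
      (\<Sum>i<length w. \<chi> (path_vertex G g w (Suc i)) - \<chi> (path_vertex G g w i))"
    using assms by (simp add: word_flux_eq_sum)
  also have "\<dots> = \<chi> (g \<otimes> word_eval G w) - \<chi> g"
    using sum_lessThan_telescope[of "\<lambda>i. \<chi> (path_vertex G g w i)"] assms(1) by simp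
  finally show ?thesis .
qed

lemma word_flux_insert_null_loop:
  assumes "g \<in> carrier G" "set u \<subseteq> carrier G" "set m \<subseteq> carrier G"
    and "word_eval G m = \<one>" and "\<And>h. h \<in> carrier G \<Longrightarrow> word_flux G f h m = 0"
  shows "word_flux G f g (u @ m @ v) = word_flux G f g (u @ v)"
proof -
  define h where "h = g \<otimes> word_eval G u"
  have h: "h \<in> carrier G" unfolding h_def using assms(1,2) by simp
  have "word_flux G f g (u @ m @ v) = word_flux G f g u + word_flux G f h (m @ v)"
    unfolding h_def using assms(1,2) by (rule word_flux_append)
  also have "word_flux G f h (m @ v) = word_flux G f h v"
    using word_flux_append[OF h assms(3)] assms(4,5) h by simp
  also have "word_flux G f g u + word_flux G f h v = word_flux G f g (u @ v)"
    unfolding h_def using assms(1,2) by (rule word_flux_append[symmetric])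
  finally show ?thesis .
qed

end

context cayley_presentation
begin

text \<open>The presentation turns every closed word into the empty word by insertions and deletions
  of relators and backtracks, and these do not change the flux of an antisymmetric edge function
  that vanishes around relator loops.\<close>

lemma word_step_preserves_flux:
  assumes antisym: "\<And>a b. f a b + f b a = 0"
    and relators: "\<And>g w. g \<in> carrier G \<Longrightarrow> w \<in> R \<Longrightarrow> word_flux G f g w = 0"
    and "word_step G S R a b"
  shows "(set a \<subseteq> S \<longleftrightarrow> set b \<subseteq> S) \<and>
    (set a \<subseteq> S \<longrightarrow> (\<forall>g \<in> carrier G. word_flux G f g a = word_flux G f g b))"
  using assms(3)
proof (induction rule: word_step.induct)
  case (ins_backtrack s u v)
  then have "set [s, inv s] \<subseteq> S" "s \<in> carrier G" using gens_inv gens_closed by auto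
  moreover have "word_flux G f h [s, inv s] = 0" if "h \<in> carrier G" for h
    using antisym[of h "h \<otimes> s"] that \<open>s \<in> carrier G\<close> by (simp add: m_assoc)
  ultimately show ?case
    using word_flux_insert_null_loop[of _ u "[s, inv s]" f v] by (auto simp: gens_word_closed)
next
  case (ins_relator w u v)
  then show ?case
    using word_flux_insert_null_loop[of _ u w f v] relator_word[OF ins_relator]
      relator_eval[OF ins_relator] relators[of _ w]
    by (auto simp: gens_word_closed)
qed

lemma closed_word_flux_eq_0:
  assumes antisym: "\<And>a b. f a b + f b a = 0"
    and relators: "\<And>g w. g \<in> carrier G \<Longrightarrow> w \<in> R \<Longrightarrow> word_flux G f g w = 0"
    and w: "set w \<subseteq> S" "word_eval G w = \<one>" and g: "g \<in> carrier G"
  shows "word_flux G f g w = 0"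
proof -
  have "(symclp (word_step G S R))\<^sup>*\<^sup>* w []"
    using trivial_word_iff w unfolding equivclp_def by blast
  then have "set [] \<subseteq> S \<and> (\<forall>g \<in> carrier G. word_flux G f g w = word_flux G f g [])"
  proof (induction rule: rtranclp_induct)
    case base then show ?case using w(1) by simp
  next
    case (step y z)
    with word_step_preserves_flux[OF antisym relators, of y z]
      word_step_preserves_flux[OF antisym relators, of z y]
    show ?case unfolding symclp_def by auto
  qed
  with g show ?thesis by simp
qed

lemma induced_path_word:
  assumes "(induced_adj G S X)\<^sup>*\<^sup>* a b" and "a \<in> X" and "X \<subseteq> carrier G"
  shows "\<exists>u. set u \<subseteq> S \<and> a \<otimes> word_eval G u = b \<and> (\<forall>i \<le> length u. path_vertex G a u i \<in> X)"
  using assms(1)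
proof (induction rule: rtranclp_induct)
  case base
  then show ?case using assms(2,3) by (intro exI[of _ "[]"]) (auto simp: path_vertex_def)
next
  case (step y z)
  obtain u where u: "set u \<subseteq> S" "a \<otimes> word_eval G u = y"
    and u_path: "\<forall>i \<le> length u. path_vertex G a u i \<in> X"
    using step.IH by blast
  have "y \<in> X" "z \<in> X" and adj: "cayley_adj G S y z \<or> cayley_adj G S z y"
    using step(2) unfolding induced_adj_def by auto
  then have yz: "y \<in> carrier G" "z \<in> carrier G" using assms(3) by auto
  obtain t where t: "t \<in> S" "y \<otimes> t = z"
  proof (cases "cayley_adj G S y z")
    case True then show ?thesis using that unfolding cayley_adj_def by blast
  next
    case False
    then obtain t' where t': "t' \<in> S" "z \<otimes> t' = y" using adj unfolding cayley_adj_def by blast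
    then have "y \<otimes> inv t' = z" using gens_closed yz by (auto simp: m_assoc)
    then show ?thesis using that gens_inv[OF t'(1)] by blast
  qed
  have a: "a \<in> carrier G" using assms(2,3) by blast
  have uC: "set u \<subseteq> carrier G" using u(1) by (rule gens_word_closed)
  have tC: "t \<in> carrier G" using t(1) gens_closed by blast
  have end_z: "a \<otimes> word_eval G (u @ [t]) = z"
    using a uC tC u(2) t(2) by (simp add: word_eval_append m_assoc[symmetric])
  have "path_vertex G a (u @ [t]) i \<in> X" if "i \<le> length (u @ [t])" for i
  proof (cases "i \<le> length u")
    case True
    then show ?thesis using u_path by (simp add: path_vertex_snoc)
  next
    case False
    then have "i = length (u @ [t])" using that by simp
    then show ?thesis using end_z \<open>z \<in> X\<close> by (simp only: path_vertex_length)
  qed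
  then show ?case using u(1) t(1) end_z by (intro exI[of _ "u @ [t]"]) auto
qed

lemma len_path_vertex_dist:
  assumes g: "g \<in> carrier G" and w: "set w \<subseteq> S" and "i \<le> j" "j \<le> length w"
  shows "len (path_vertex G g w j) \<le> len (path_vertex G g w i) + (j - i) \<and>
         len (path_vertex G g w i) \<le> len (path_vertex G g w j) + (j - i)"
  using assms(3,4)
proof (induction j)
  case (Suc j)
  show ?case
  proof (cases "i = Suc j")
    case False
    then have "i \<le> j" "j < length w" using Suc.prems by auto
    have wC: "set w \<subseteq> carrier G" using w by (rule gens_word_closed)
    have "w ! j \<in> S" using w \<open>j < length w\<close> nth_mem by blast
    moreover have "path_vertex G g w (Suc j) = path_vertex G g w j \<otimes> w ! j"
      using g wC \<open>j < length w\<close> by (rule path_vertex_Suc)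
    moreover have "path_vertex G g w j \<in> carrier G" using g wC by (rule path_vertex_closed)
    ultimately have "len (path_vertex G g w (Suc j)) \<le> len (path_vertex G g w j) + 1"
      "len (path_vertex G g w j) \<le> len (path_vertex G g w (Suc j)) + 1"
      using len_mult_gen_le len_le_mult_gen by auto
    with Suc.IH \<open>i \<le> j\<close> \<open>j < length w\<close> show ?thesis by auto
  qed simp
qed simp

text \<open>Go around the loop from \<open>j\<close> to \<open>i\<close> in both directions.\<close>

lemma closed_word_len_bound:
  assumes g: "g \<in> carrier G" and w: "set w \<subseteq> S" "word_eval G w = \<one>"
    and "i \<le> length w" "j \<le> length w"
  shows "2 * len (path_vertex G g w i) \<le> 2 * len (path_vertex G g w j) + length w"
proof -
  let ?p = "path_vertex G g w" and ?L = "length w"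
  have ends: "?p ?L = ?p 0" using g w by simp
  note dist = len_path_vertex_dist[OF g w(1)]
  show ?thesis
  proof (cases "i \<le> j")
    case True
    then show ?thesis
      using dist[of i j] dist[of 0 i] dist[of j ?L] ends assms(4,5) by auto
  next
    case False
    then show ?thesis
      using dist[of j i] dist[of i ?L] dist[of 0 j] ends assms(4,5) by auto
  qed
qed

end

section \<open>Connectedness of the slices \<open>B\<^sub>n\<^sub>+\<^sub>r \<inter> U\<close>\<close>

locale ball_slice = cayley_presentation +
  fixes n :: nat and r :: real and U :: "'a set" and x :: 'a
  assumes U_component: "U \<in> vcomponents G S (ball_compl n)"
    and relators_short: "\<forall>w \<in> R. real (length w) / 2 < r"
    and x_slice: "x \<in> cayley_ball G S (real n + r) \<inter> U"
begin

abbreviation slice :: "'a set" where "slice \<equiv> cayley_ball G S (real n + r) \<inter> U"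

definition slice_comp :: "'a set" where
  "slice_comp = {z. (induced_adj G S slice)\<^sup>*\<^sup>* x z}"

definition ball_flux :: "'a \<Rightarrow> 'a \<Rightarrow> int" where
  "ball_flux a b = of_bool (a \<in> ball_le n \<and> b \<in> slice_comp) - of_bool (b \<in> ball_le n \<and> a \<in> slice_comp)"

lemma U_outside_ball: "u \<in> U \<Longrightarrow> u \<in> carrier G \<and> n < len u"
  using vcomponents_subset[OF U_component] ball_compl_eq by auto

lemma slice_memI: "z \<in> U \<Longrightarrow> real (len z) \<le> real n + r \<Longrightarrow> z \<in> slice"
  using U_outside_ball unfolding cayley_ball_def by auto

lemma slice_comp_subset: "slice_comp \<subseteq> slice"
  unfolding slice_comp_def using induced_path_in_set x_slice by fast

lemma slice_comp_outside_ball: "z \<in> slice_comp \<Longrightarrow> z \<notin> ball_le n"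
  using slice_comp_subset U_outside_ball by fastforce

lemma slice_comp_exit:
  assumes a: "a \<in> slice_comp" and b: "b \<in> carrier G" "real (len b) \<le> real n + r" "b \<notin> ball_le n"
    and adj: "cayley_adj G S a b \<or> cayley_adj G S b a"
  shows "b \<in> slice_comp"
proof -
  have "a \<in> slice" using a slice_comp_subset by blast
  have "b \<in> ball_compl n" using b by (auto simp: ball_compl_eq)
  moreover have "a \<in> U" using \<open>a \<in> slice\<close> by blast
  ultimately have "b \<in> U" using vcomponents_adj_closed[OF U_component _ _ adj] by simp
  then have "b \<in> slice" using b(2) by (rule slice_memI)
  then have "induced_adj G S slice a b" using \<open>a \<in> slice\<close> adj unfolding induced_adj_def by blast
  with a show ?thesis unfolding slice_comp_def by (simp add: rtranclp.rtrancl_into_rtrancl)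
qed

lemma ball_flux_antisym: "ball_flux a b + ball_flux b a = 0"
  unfolding ball_flux_def by linarith

lemma ball_flux_edge:
  assumes "a \<in> carrier G" "b \<in> carrier G" "cayley_adj G S a b"
    and "real (len a) \<le> real n + r" "real (len b) \<le> real n + r"
  shows "ball_flux a b = of_bool (b \<in> slice_comp) - of_bool (a \<in> slice_comp)"
proof -
  have "b \<in> ball_le n" if "a \<in> slice_comp" "b \<notin> slice_comp"
    using slice_comp_exit[OF that(1) assms(2,5)] assms(3) that(2) by blast
  moreover have "a \<in> ball_le n" if "b \<in> slice_comp" "a \<notin> slice_comp"
    using slice_comp_exit[OF that(1) assms(1,4)] assms(3) that(2) by blast
  ultimately show ?thesis
    using slice_comp_outside_ball[of a] slice_comp_outside_ball[of b] assms(1,2)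
    unfolding ball_flux_def
    by (cases "a \<in> slice_comp"; cases "b \<in> slice_comp") simp_all
qed

lemma ball_flux_outside_ball:
  assumes "g \<in> carrier G" "set u \<subseteq> S" "\<forall>i \<le> length u. path_vertex G g u i \<in> ball_compl n"
  shows "word_flux G ball_flux g u = 0"
proof (rule word_flux_eq_0I[OF assms(1) gens_word_closed[OF assms(2)]])
  fix i assume "i < length u"
  then have "path_vertex G g u i \<notin> ball_le n" "path_vertex G g u (Suc i) \<notin> ball_le n"
    using assms(3)[rule_format, of i] assms(3)[rule_format, of "Suc i"] by (auto simp: ball_compl_eq)
  then show "ball_flux (path_vertex G g u i) (path_vertex G g u (Suc i)) = 0"
    unfolding ball_flux_def by (simp only: de_Morgan_conj) simp
qed

lemma ball_flux_inside_ball: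
  assumes "g \<in> carrier G" "set u \<subseteq> S" "\<forall>i \<le> length u. path_vertex G g u i \<in> ball_le n"
  shows "word_flux G ball_flux g u = 0"
proof (rule word_flux_eq_0I[OF assms(1) gens_word_closed[OF assms(2)]])
  fix i assume "i < length u"
  then have "path_vertex G g u i \<notin> slice_comp" "path_vertex G g u (Suc i) \<notin> slice_comp"
    using assms(3)[rule_format, of i] assms(3)[rule_format, of "Suc i"] slice_comp_outside_ball
    by auto
  then show "ball_flux (path_vertex G g u i) (path_vertex G g u (Suc i)) = 0"
    unfolding ball_flux_def by simp
qed

text \<open>A relator loop meeting \<open>B\<^sub>n\<close> stays inside \<open>B\<^sub>n\<^sub>+\<^sub>r\<close>, where the flux is the
  coboundary of the indicator of \<open>slice_comp\<close>; a loop missing \<open>B\<^sub>n\<close> carries no flux at all.\<close>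

lemma relator_ball_flux:
  assumes g: "g \<in> carrier G" and w: "w \<in> R"
  shows "word_flux G ball_flux g w = 0"
proof -
  let ?p = "path_vertex G g w"
  have wS: "set w \<subseteq> S" and wC: "set w \<subseteq> carrier G" and w1: "word_eval G w = \<one>"
    using relator_word[OF w] gens_word_closed relator_eval[OF w] by auto
  have p: "?p i \<in> carrier G" for i using g wC by (rule path_vertex_closed)
  show ?thesis
  proof (cases "\<exists>j \<le> length w. ?p j \<in> ball_le n")
    case True
    then obtain j where j: "j \<le> length w" "len (?p j) \<le> n" by blast
    have near: "real (len (?p i)) \<le> real n + r" if "i \<le> length w" for i
    proof -
      have "2 * len (?p i) \<le> 2 * n + length w"
        using closed_word_len_bound[OF g wS w1 that j(1)] j(2) by linarith
      then show ?thesis using relators_short w by fastforce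
    qed
    have "ball_flux (?p i) (?p (Suc i)) = of_bool (?p (Suc i) \<in> slice_comp) - of_bool (?p i \<in> slice_comp)"
      if "i < length w" for i
    proof (rule ball_flux_edge[OF p p _ near near])
      have "w ! i \<in> S" using that wS by auto
      then show "cayley_adj G S (?p i) (?p (Suc i))"
        using p path_vertex_Suc[OF g wC that] unfolding cayley_adj_def by auto
    qed (use that in auto)
    then show ?thesis using word_flux_telescope[OF g wC] w1 g by simp
  next
    case False
    then show ?thesis
      by (intro word_flux_eq_0I[OF g wC]) (auto simp: ball_flux_def p)
  qed
qed

lemma slice_reaches_sphere:
  assumes z: "z \<in> slice"
  shows "\<exists>k s. k \<in> carrier G \<and> s \<in> S \<and> len k = n \<and> k \<otimes> s \<in> slice \<and>
    (induced_adj G S slice)\<^sup>*\<^sup>* (k \<otimes> s) z"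
proof -
  have "z \<in> U" and zc: "z \<in> carrier G" "n < len z" and dz: "real (len z) \<le> real n + r"
    using z U_outside_ball unfolding cayley_ball_def by auto
  obtain c where c: "c \<in> carrier G" "len c = Suc n"
    and geo: "(induced_adj G S {q \<in> carrier G. Suc n \<le> len q \<and> len q \<le> len z})\<^sup>*\<^sup>* c z"
    using geodesic_descent[OF zc(1), of "Suc n"] zc by auto
  let ?T = "{q \<in> carrier G. Suc n \<le> len q \<and> len q \<le> len z}"
  have "?T \<subseteq> ball_compl n" by (auto simp: ball_compl_eq)
  then have "c \<in> U" and path: "(induced_adj G S (?T \<inter> U))\<^sup>*\<^sup>* c z"
    using induced_path_into_component[OF U_component _ geo \<open>z \<in> U\<close>] by auto
  have "real (len c) \<le> real n + r" using c(2) zc(2) dz by linarith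
  with \<open>c \<in> U\<close> have "c \<in> slice" by (rule slice_memI)
  moreover have "?T \<inter> U \<subseteq> slice" using dz unfolding cayley_ball_def by auto
  then have "(induced_adj G S slice)\<^sup>*\<^sup>* c z" using path by (rule induced_path_mono)
  moreover obtain k s where "k \<in> carrier G" "s \<in> S" "len k = n" "k \<otimes> s = c"
    using len_Suc_predecessor[OF c] by blast
  ultimately show ?thesis by blast
qed

text \<open>If \<open>y\<close> were outside \<open>slice_comp\<close>, join \<open>x\<close> and \<open>y\<close> to the sphere, connect the two
  entry points through \<open>U\<close> and the two base points through \<open>B\<^sub>n\<close>: the resulting loop crosses
  into \<open>slice_comp\<close> exactly once, so its flux is \<open>1\<close>, contradicting \<open>closed_word_flux_eq_0\<close>.\<close>

lemma slice_subset_slice_comp: "y \<in> slice \<Longrightarrow> y \<in> slice_comp"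
proof (rule ccontr)
  assume y: "y \<in> slice" and "y \<notin> slice_comp"
  obtain k1 s1 where k1: "k1 \<in> carrier G" "s1 \<in> S" "len k1 = n"
    and c: "k1 \<otimes> s1 \<in> slice" "(induced_adj G S slice)\<^sup>*\<^sup>* (k1 \<otimes> s1) x"
    using slice_reaches_sphere[OF x_slice] by blast
  obtain k2 s2 where k2: "k2 \<in> carrier G" "s2 \<in> S" "len k2 = n"
    and e: "k2 \<otimes> s2 \<in> slice" "(induced_adj G S slice)\<^sup>*\<^sup>* (k2 \<otimes> s2) y"
    using slice_reaches_sphere[OF y] by blast
  define c e where "c = k1 \<otimes> s1" and "e = k2 \<otimes> s2"
  have "c \<in> slice_comp" using induced_path_sym[OF c(2)] unfolding slice_comp_def c_def by simp
  have "e \<notin> slice_comp"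
    using e(2) \<open>y \<notin> slice_comp\<close> unfolding slice_comp_def e_def mem_Collect_eq by (meson rtranclp_trans)
  have s12: "s1 \<in> carrier G" "s2 \<in> carrier G" using k1 k2 gens_closed by auto
  have "c \<in> U" "e \<in> U" using c e unfolding c_def e_def by auto
  then obtain u1 where u1: "set u1 \<subseteq> S" "c \<otimes> word_eval G u1 = e"
    and u1_path: "\<forall>i \<le> length u1. path_vertex G c u1 i \<in> ball_compl n"
    using induced_path_word[of "ball_compl n" c e] vcomponents_eq_reachable[OF U_component]
      vcomponents_subset[OF U_component] by blast
  obtain u2 where u2: "set u2 \<subseteq> S" "k2 \<otimes> word_eval G u2 = k1"
    and u2_path: "\<forall>i \<le> length u2. path_vertex G k2 u2 i \<in> ball_le n"
    using induced_path_word[OF ball_le_connected[of k2 n k1]] k1 k2 by auto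
  have cC: "c \<in> carrier G" using \<open>c \<in> U\<close> U_outside_ball by auto
  have u12C: "set u1 \<subseteq> carrier G" "set u2 \<subseteq> carrier G" using u1(1) u2(1) gens_word_closed by auto
  have e_k2: "e \<otimes> inv s2 = k2" using k2 s12 unfolding e_def by (simp add: m_assoc)
  define W where "W = s1 # u1 @ inv s2 # u2"
  have WS: "set W \<subseteq> S" unfolding W_def using u1(1) u2(1) k1(2) gens_inv[OF k2(2)] by auto
  have "k1 \<otimes> word_eval G W = k1"
  proof -
    have "k1 \<otimes> word_eval G W = ((k1 \<otimes> s1) \<otimes> word_eval G u1) \<otimes> inv s2 \<otimes> word_eval G u2"
      unfolding W_def using k1 s12 u12C by (simp add: word_eval_append m_assoc)
    also have "\<dots> = k1" using u1(2) e_k2 u2(2) unfolding c_def e_def by simp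
    finally show ?thesis .
  qed
  then have W1: "word_eval G W = \<one>" using k1(1) WS gens_word_closed by simp
  have flux_u1: "word_flux G ball_flux c u1 = 0"
    using cC u1(1) u1_path by (rule ball_flux_outside_ball)
  have flux_u2: "word_flux G ball_flux k2 u2 = 0"
    using k2(1) u2(1) u2_path by (rule ball_flux_inside_ball)
  have "word_flux G ball_flux k1 W =
      ball_flux k1 c + word_flux G ball_flux c u1 + ball_flux e k2 + word_flux G ball_flux k2 u2"
    unfolding W_def c_def using word_flux_append[OF _ u12C(1)] k1 s12 u1(2) e_k2
    by (simp add: c_def e_def)
  also have "\<dots> = 1"
  proof -
    have "c \<notin> ball_le n" using \<open>c \<in> slice_comp\<close> by (rule slice_comp_outside_ball)
    moreover have "k2 \<notin> slice_comp" using k2 slice_comp_outside_ball by auto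
    ultimately show ?thesis
      using flux_u1 flux_u2 k1 \<open>c \<in> slice_comp\<close> \<open>e \<notin> slice_comp\<close> by (auto simp: ball_flux_def)
  qed
  finally show False
    using closed_word_flux_eq_0[OF ball_flux_antisym relator_ball_flux WS W1 k1(1)] by simp
qed

end

lemma (in cayley_presentation) ball_slice_connected:
  assumes "U \<in> vcomponents G S (ball_compl n)" and "\<forall>w \<in> R. real (length w) / 2 < r"
  shows "connected_vset G S (cayley_ball G S (real n + r) \<inter> U)"
  unfolding connected_vset_def
proof (intro ballI)
  fix x y assume x: "x \<in> cayley_ball G S (real n + r) \<inter> U"
    and y: "y \<in> cayley_ball G S (real n + r) \<inter> U"
  interpret ball_slice G S R n r U x
    using assms x by unfold_locales
  show "(induced_adj G S (cayley_ball G S (real n + r) \<inter> U))\<^sup>*\<^sup>* x y"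
    using slice_subset_slice_comp[OF y] unfolding slice_comp_def by simp
qed

theorem mainTheorem1:
  fixes G (structure) and S :: "'a set" and R :: "'a list set" and r :: real
  assumes "group G"
    and "finite S" and "finite R"
    and "is_presentation G S R"
    and "one_ended G S"
    and "0 < r"
    and "\<forall>w\<in>R. real (length w) / 2 < r"
  shows "\<forall>n::nat. connected_vset G S (cayley_ball G S (real n + r) \<inter> inf_comp G S n)"
proof
  fix n :: nat
  interpret cayley_presentation G S R
    using assms(1,2,4) by (simp add: cayley_presentation_def cayley_presentation_axioms_def)
  show "connected_vset G S (cayley_ball G S (real n + r) \<inter> inf_comp G S n)"
    using ball_slice_connected[OF inf_comp_in_vcomponents[OF assms(5)] assms(7)] .
qed

end
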